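(* Fix $\alpha\in(0,1/6)$. Let \[ \Delta_\alpha=\Big\{(x,z)\in\mathbb{R}^2:\ x\in\big(-\tfrac{2}{\alpha}+1-3\alpha,\ 1-3\alpha\big),\ z\ge -\tfrac{2}{\alpha\pi}\log\cos\Big(\tfrac{\alpha\pi}{2}\big(x-1+3\alpha+\tfrac1\alpha\big)\Big)\Big\}, \] let $d(x,z)$ be the Euclidean distance from $(x,z)$ to $\Delta_\alpha$, let $(\Delta_\alpha)^{2\alpha}=\{(x,z):d(x,z)\le 2\alpha\}$, and define $\varphi_\alpha:\mathrm{cl}\big((\Delta_\alpha)^{2\alpha}\setminus\Delta_\alpha\big)\to\mathbb{R}$ by \[ \varphi_\alpha(x,z)=-1+2\alpha-\sqrt{4\alpha^2-d(x,z)^2}. \] Then $\varphi=\varphi_\alpha$ is a convex function satisfying \[ \frac{\det D^2\varphi}{(1+|D\varphi|^2)^{3/2}}\le-\frac{\pi}{4}\varphi_z \] on its domain (at points where the derivatives are defined).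
   Context: Here $D$ and $D^2$ denote the gradient and Hessian in the variables $(x,z)$, and $\varphi_z$ the partial derivative in $z$. *)

theory Defs
  imports "HOL-Analysis.Analysis"
begin

text \<open>Points of the plane are pairs (x,z) :: real \<times> real; the product metric on
  real \<times> real is the Euclidean one.\<close>

definition Delta :: "real \<Rightarrow> (real \<times> real) set" where
  "Delta \<alpha> = {(x, z). -2/\<alpha> + 1 - 3*\<alpha> < x \<and> x < 1 - 3*\<alpha> \<and>
      z \<ge> -(2/(\<alpha>*pi)) * ln (cos ((\<alpha>*pi/2) * (x - 1 + 3*\<alpha> + 1/\<alpha>)))}"

definition dDelta :: "real \<Rightarrow> real \<times> real \<Rightarrow> real" where
  "dDelta \<alpha> p = infdist p (Delta \<alpha>)"

definition DeltaNbhd :: "real \<Rightarrow> (real \<times> real) set" where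
  "DeltaNbhd \<alpha> = {p. dDelta \<alpha> p \<le> 2*\<alpha>}"

definition phiDom :: "real \<Rightarrow> (real \<times> real) set" where
  "phiDom \<alpha> = closure (DeltaNbhd \<alpha> - Delta \<alpha>)"

definition phi :: "real \<Rightarrow> real \<times> real \<Rightarrow> real" where
  "phi \<alpha> p = -1 + 2*\<alpha> - sqrt (4*\<alpha>^2 - (dDelta \<alpha> p)^2)"

end

theory Submission
  imports Defs
begin

text \<open>\<open>Delta \<alpha>\<close> is the epigraph, over the interval where \<open>\<bar>theta\<bar> < \<pi>/2\<close>, of the
  convex function \<open>bdry = -(2/(\<alpha>\<pi>)) ln cos theta\<close>: its derivative is \<open>tan theta\<close>, and the
  slope angle \<open>theta\<close> grows at the constant rate \<open>\<alpha>\<pi>/2\<close>. Hence the distance \<open>d\<close> to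
  \<open>Delta \<alpha>\<close> is convex, and so is \<open>phi = f \<circ> d\<close> with \<open>f r = -1 + 2\<alpha> - sqrt (4\<alpha>\<^sup>2 - r\<^sup>2)\<close>
  increasing and convex on \<open>[0, 2\<alpha>]\<close>.

  For the curvature bound write a point of the domain as \<open>p = (x0, bdry x0) + d \<nu>\<close>, with \<open>\<nu>\<close>
  the outer unit normal and \<open>\<tau>\<close> the unit tangent at the foot point. Along every line through \<open>p\<close>,
  \<open>phi\<close> is touched from below by \<open>f\<close> of the distance to the tangent line, and from above by
  \<open>f\<close> of the distance to the foot point and, in direction \<open>\<tau>\<close>, to nearby graph points.
  Comparing derivatives gives \<open>D phi = f'(d) \<nu>\<close> and, in the frame \<open>(\<nu>, \<tau>)\<close>, a Hessian with
  \<open>\<nu>\<nu>\<close>-entry \<open>f''(d)\<close>, vanishing mixed entries and \<open>\<tau>\<tau>\<close>-entry at most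
  \<open>f'(d) (\<alpha>\<pi>/2) cos theta\<close>. As the graph of \<open>f\<close> is a circle of radius \<open>2\<alpha>\<close>,
  \<open>f'' / (1 + f'\<^sup>2) powr (3/2) = 1/(2\<alpha>)\<close>, and the bound \<open>(\<pi>/4) f'(d) cos theta = -(\<pi>/4) \<partial>\<^sub>z phi\<close>
  follows.\<close>

lemma inner_real_pair: "(x :: real \<times> real) \<bullet> y = fst x * fst y + snd x * snd y"
  by (cases x, cases y) simp

lemma powr_three_halves: "0 < x \<Longrightarrow> x powr (3/2) = x * sqrt (x :: real)"
proof -
  assume "0 < x"
  have "x powr (3/2) = x powr (1 + 1/2)" by simp
  also have "\<dots> = x powr 1 * x powr (1/2)" by (rule powr_add)
  also have "\<dots> = x * sqrt x" using \<open>0 < x\<close> by (simp add: powr_half_sqrt)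
  finally show ?thesis .
qed

lemma linear_coeff_zero_if_nonneg:
  fixes m T :: real
  assumes "\<And>\<sigma>. 0 \<le> \<sigma> * m + \<sigma>\<^sup>2 * T"
  shows "m = 0"
proof -
  define k where "k = \<bar>T\<bar> + 1"
  have k: "k > 0" "T - k < 0" by (auto simp: k_def)
  have "(-m/k) * m + (-m/k)\<^sup>2 * T = m\<^sup>2 * (T - k) / k\<^sup>2"
    using k by (simp add: field_simps power2_eq_square)
  then have "0 \<le> m\<^sup>2 * (T - k)"
    using assms[of "-m/k"] k by (simp add: zero_le_divide_iff)
  then have "m\<^sup>2 \<le> 0" using k by (simp add: zero_le_mult_iff)
  then show ?thesis by simp
qed

lemma det_rotated_frame:
  fixes H :: "real \<times> real \<Rightarrow> real \<times> real"
  assumes "linear H" and "s\<^sup>2 + c\<^sup>2 = 1"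
  defines "\<nu> \<equiv> (s, -c)" and "\<tau> \<equiv> (c, s)"
  shows "fst (H (1,0)) * snd (H (0,1)) - snd (H (1,0)) * fst (H (0,1))
       = (H \<nu> \<bullet> \<nu>) * (H \<tau> \<bullet> \<tau>) - (H \<tau> \<bullet> \<nu>) * (H \<nu> \<bullet> \<tau>)"
proof -
  obtain a11 a21 where e1: "H (1,0) = (a11, a21)" by fastforce
  obtain a12 a22 where e2: "H (0,1) = (a12, a22)" by fastforce
  have H: "H (x, y) = (a11 * x + a12 * y, a21 * x + a22 * y)" for x y
  proof -
    have "(x, y) = x *\<^sub>R (1,0) + y *\<^sub>R (0,1)" by simp
    then have "H (x, y) = x *\<^sub>R H (1,0) + y *\<^sub>R H (0,1)"
      by (simp only: linear_add[OF assms(1)] linear_scale[OF assms(1)])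
    then show ?thesis by (simp add: e1 e2 algebra_simps)
  qed
  show ?thesis
    using assms(2) unfolding \<nu>_def \<tau>_def H e1 e2 inner_Pair inner_real_def fst_conv snd_conv
    by algebra
qed

lemma DERIV_local_min_nhds:
  fixes f :: "real \<Rightarrow> real"
  assumes "(f has_real_derivative l) (at x)" and "\<forall>\<^sub>F y in nhds x. f x \<le> f y"
  shows "l = 0"
proof -
  obtain d where "0 < d" "\<forall>y. dist y x < d \<longrightarrow> f x \<le> f y"
    using assms(2) unfolding eventually_nhds_metric by blast
  then show ?thesis
    by (intro DERIV_local_min[OF assms(1) \<open>0 < d\<close>]) (auto simp: dist_real_def abs_minus_commute)
qed

lemma DERIV_local_min_second_nonneg:
  fixes e e' :: "real \<Rightarrow> real"
  assumes near: "\<forall>\<^sub>F t in nhds 0. 0 \<le> e t \<and> (e has_real_derivative e' t) (at t)"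
    and e0: "e 0 = 0"
  shows "e' 0 = 0" and "(e' has_real_derivative E) (at 0) \<Longrightarrow> 0 \<le> E"
proof -
  show e'0: "e' 0 = 0"
    using near e0 by (intro DERIV_local_min_nhds[of e _ 0])
      (auto dest: eventually_nhds_x_imp_x elim: eventually_mono)
  assume E: "(e' has_real_derivative E) (at 0)"
  show "0 \<le> E"
  proof (rule ccontr)
    assume "\<not> 0 \<le> E"
    obtain \<delta> where \<delta>: "0 < \<delta>" "\<And>t. dist t 0 < \<delta> \<Longrightarrow> 0 \<le> e t \<and> (e has_real_derivative e' t) (at t)"
      using near unfolding eventually_nhds_metric by blast
    have "((\<lambda>h. (e' (0 + h) - e' 0) / h) \<longlongrightarrow> E) (at 0)" using E by (simp add: DERIV_def)
    then have "\<forall>\<^sub>F h in at 0. (e' h - e' 0) / h < 0"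
      using \<open>\<not> 0 \<le> E\<close> by (auto elim: order_tendstoD(2))
    then obtain \<eta> where \<eta>: "0 < \<eta>" "\<And>h. h \<noteq> 0 \<Longrightarrow> dist h 0 < \<eta> \<Longrightarrow> e' h / h < 0"
      unfolding eventually_at using e'0 by auto
    define t where "t = min \<eta> \<delta> / 2"
    have t: "0 < t" "t < \<eta>" "t < \<delta>" using \<eta> \<delta> by (auto simp: t_def)
    obtain z where z: "0 < z" "z < t" "e t - e 0 = (t - 0) * e' z"
      using MVT2[of 0 t e e'] t \<delta>(2) by force
    have "e' z < 0" using \<eta>(2)[of z] z t by (simp add: divide_less_0_iff)
    then have "e t < 0" using z e0 by (simp add: mult_pos_neg)
    then show False using \<delta>(2)[of t] t by simp
  qed
qed

lemma has_real_derivative_along_line: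
  fixes f :: "'a::real_inner \<Rightarrow> real"
  assumes "(f has_derivative (\<lambda>h. g \<bullet> h)) (at (p + t *\<^sub>R v))"
  shows "((\<lambda>s. f (p + s *\<^sub>R v)) has_real_derivative g \<bullet> v) (at t)"
proof -
  have "((\<lambda>s. p + s *\<^sub>R v) has_derivative (\<lambda>s. s *\<^sub>R v)) (at t)"
    by (auto intro!: derivative_eq_intros)
  from diff_chain_at[OF this assms]
  have "((\<lambda>s. f (p + s *\<^sub>R v)) has_derivative (\<lambda>s. s * (g \<bullet> v))) (at t)"
    by (simp add: o_def)
  then show ?thesis by (simp add: has_field_derivative_def mult_commute_abs)
qed

lemma has_real_derivative_inner_along_line:
  fixes G :: "'a::real_inner \<Rightarrow> 'b::real_inner"
  assumes "(G has_derivative H) (at p)"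
  shows "((\<lambda>s. G (p + s *\<^sub>R v) \<bullet> u) has_real_derivative H v \<bullet> u) (at 0)"
proof -
  have "((\<lambda>s. p + s *\<^sub>R v) has_derivative (\<lambda>s. s *\<^sub>R v)) (at 0)"
    by (auto intro!: derivative_eq_intros)
  from diff_chain_at[OF this] have "((\<lambda>s. G (p + s *\<^sub>R v)) has_derivative (\<lambda>s. H (s *\<^sub>R v))) (at 0)"
    using assms by (simp add: o_def)
  then have "((\<lambda>s. G (p + s *\<^sub>R v) \<bullet> u) has_derivative (\<lambda>s. H (s *\<^sub>R v) \<bullet> u)) (at 0)"
    by (rule has_derivative_inner_left)
  then have "((\<lambda>s. G (p + s *\<^sub>R v) \<bullet> u) has_derivative (\<lambda>s. s * (H v \<bullet> u))) (at 0)"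
    by (simp add: linear_scale[OF has_derivative_linear[OF assms]])
  then show ?thesis by (simp add: has_field_derivative_def mult_commute_abs)
qed

lemma touching_barrier:
  fixes f :: "'a::real_inner \<Rightarrow> real" and G :: "'a \<Rightarrow> 'a"
  assumes near: "\<forall>\<^sub>F t in nhds 0. (f has_derivative (\<lambda>h. G (p + t *\<^sub>R v) \<bullet> h)) (at (p + t *\<^sub>R v))
      \<and> (b has_real_derivative b' t) (at t) \<and> 0 \<le> \<sigma> * (f (p + t *\<^sub>R v) - b t)"
    and touch: "b 0 = f p" and "\<sigma> \<noteq> 0"
  shows "G p \<bullet> v = b' 0"
    and "(G has_derivative H) (at p) \<Longrightarrow> (b' has_real_derivative B) (at 0) \<Longrightarrow> 0 \<le> \<sigma> * (H v \<bullet> v - B)"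
proof -
  define e where "e t = \<sigma> * (f (p + t *\<^sub>R v) - b t)" for t
  define e' where "e' t = \<sigma> * (G (p + t *\<^sub>R v) \<bullet> v - b' t)" for t
  have near_e: "\<forall>\<^sub>F t in nhds 0. 0 \<le> e t \<and> (e has_real_derivative e' t) (at t)"
    using near unfolding e_def[abs_def] e'_def
    by eventually_elim (auto intro!: DERIV_cmult DERIV_diff has_real_derivative_along_line)
  have e0: "e 0 = 0" using touch by (simp add: e_def)
  have "e' 0 = 0"
    using DERIV_local_min_second_nonneg(1)[OF near_e e0] .
  then show "G p \<bullet> v = b' 0" using \<open>\<sigma> \<noteq> 0\<close> by (simp add: e'_def)
  assume "(G has_derivative H) (at p)" and "(b' has_real_derivative B) (at 0)"
  then have "(e' has_real_derivative \<sigma> * (H v \<bullet> v - B)) (at 0)"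
    unfolding e'_def[abs_def] by (intro DERIV_cmult DERIV_diff has_real_derivative_inner_along_line)
  then show "0 \<le> \<sigma> * (H v \<bullet> v - B)" by (rule DERIV_local_min_second_nonneg(2)[OF near_e e0])
qed

lemma eventually_line_in_open:
  fixes x v :: "'a::real_normed_vector"
  assumes "open S" "x \<in> S"
  shows "\<forall>\<^sub>F t in nhds 0. x + t *\<^sub>R v \<in> S"
proof -
  have "((\<lambda>t. x + t *\<^sub>R v) \<longlongrightarrow> x + 0 *\<^sub>R v) (nhds 0)"
    by (intro tendsto_add tendsto_const tendsto_scaleR filterlim_ident)
  then show ?thesis using assms by (auto dest: topological_tendstoD)
qed

lemma convex_on_infdist:
  fixes S :: "'a::{real_normed_vector, heine_borel} set"
  assumes "convex S" "closed S" "S \<noteq> {}"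
  shows "convex_on UNIV (\<lambda>x. infdist x S)"
proof (rule convex_onI)
  fix t :: real and x y :: 'a assume t: "0 < t" "t < 1"
  obtain qx where qx: "qx \<in> S" "infdist x S = dist x qx" using infdist_attains_inf[OF assms(2,3)] by blast
  obtain qy where qy: "qy \<in> S" "infdist y S = dist y qy" using infdist_attains_inf[OF assms(2,3)] by blast
  have "(1 - t) *\<^sub>R qx + t *\<^sub>R qy \<in> S" using assms(1) qx qy t by (intro convexD) auto
  then have "infdist ((1 - t) *\<^sub>R x + t *\<^sub>R y) S \<le> norm ((1 - t) *\<^sub>R (x - qx) + t *\<^sub>R (y - qy))"
    by (rule infdist_le2) (simp add: dist_norm algebra_simps)
  also have "\<dots> \<le> (1 - t) * dist x qx + t * dist y qy"
    using t norm_triangle_ineq[of "(1 - t) *\<^sub>R (x - qx)" "t *\<^sub>R (y - qy)"] by (simp add: dist_norm)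
  finally show "infdist ((1 - t) *\<^sub>R x + t *\<^sub>R y) S \<le> (1 - t) * infdist x S + t * infdist y S"
    using qx qy by simp
qed simp

lemma infdist_towards_nearest:
  fixes p q :: "'a::real_normed_vector"
  assumes "q \<in> S" "infdist p S = dist p q" "0 \<le> t" "t \<le> dist p q"
  shows "infdist (p + (t / dist p q) *\<^sub>R (q - p)) S = infdist p S - t"
proof (cases "dist p q = 0")
  case True
  then show ?thesis using assms(3,4) by simp
next
  case False
  let ?x = "p + (t / dist p q) *\<^sub>R (q - p)"
  have r: "0 < dist p q" using False by simp
  have "q - ?x = (1 - t / dist p q) *\<^sub>R (q - p)" by (simp add: algebra_simps)
  then have "dist ?x q = norm ((1 - t / dist p q) *\<^sub>R (q - p))"
    by (metis dist_commute dist_norm)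
  also have "\<dots> = (1 - t / dist p q) * dist p q"
    using r assms(4) by (simp add: dist_norm norm_minus_commute)
  also have "\<dots> = dist p q - t" using r by (simp add: field_simps)
  finally have "infdist ?x S \<le> infdist p S - t" using infdist_le[OF assms(1), of ?x] assms(2) by simp
  moreover have "dist p ?x = t" using r assms(3) by (simp add: dist_norm norm_minus_commute[of p])
  then have "infdist p S - t \<le> infdist ?x S" using infdist_triangle[of p S ?x] by simp
  ultimately show ?thesis by simp
qed

lemma not_DERIV_circle_cusp:
  fixes f :: "real \<Rightarrow> real"
  assumes "0 < a" and cusp: "\<And>t. 0 \<le> t \<Longrightarrow> t \<le> a \<Longrightarrow> f t = f 0 - sqrt (2 * a * t - t\<^sup>2)"
  shows "\<not> (f has_real_derivative D) (at 0)"
proof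
  assume "(f has_real_derivative D) (at 0)"
  then have "((\<lambda>h. (f (0 + h) - f 0) / h) \<longlongrightarrow> D) (at 0)" by (simp add: DERIV_def)
  then have "\<forall>\<^sub>F h in at 0. D - 1 < (f (0 + h) - f 0) / h"
    by (intro order_tendstoD(1)) auto
  then obtain \<eta> where \<eta>: "0 < \<eta>" "\<And>h. h \<noteq> 0 \<Longrightarrow> dist h 0 < \<eta> \<Longrightarrow> D - 1 < (f h - f 0) / h"
    unfolding eventually_at by auto
  define B where "B = (1 - D)\<^sup>2 + 1"
  have B: "0 < B" by (simp add: B_def add_nonneg_pos)
  define t where "t = min \<eta> (min a (2*a/B)) / 2"
  have "0 < min \<eta> (min a (2*a/B))" using \<eta>(1) assms(1) B by simp
  moreover have "min \<eta> (min a (2*a/B)) \<le> \<eta>" "min \<eta> (min a (2*a/B)) \<le> a"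
    "min \<eta> (min a (2*a/B)) \<le> 2*a/B" by simp_all
  ultimately have t: "0 < t" "t < \<eta>" "t \<le> a" "t < 2*a/B"
    unfolding t_def by linarith+
  define S where "S = 2 * a * t - t\<^sup>2"
  have S: "0 \<le> S" using t by (simp add: S_def power2_eq_square algebra_simps mult_right_mono)
  have "D - 1 < - sqrt S / t" using \<eta>(2)[of t] cusp[of t] t by (simp add: S_def)
  then have "sqrt S < (1 - D) * t" using t(1) by (simp add: field_simps)
  then have "S < ((1 - D) * t)\<^sup>2"
    using S by (metis real_sqrt_ge_zero real_sqrt_pow2 power_strict_mono zero_less_numeral)
  then have "t * (2*a) < t * (B * t)" by (simp add: S_def B_def power2_eq_square algebra_simps)
  then have "2*a < B * t" using t(1) by simp
  moreover have "B * t < 2*a" using t(4) B by (simp add: pos_less_divide_eq mult.commute)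
  ultimately show False by simp
qed

section \<open>Circular profile\<close>

definition circ :: "real \<Rightarrow> real \<Rightarrow> real" where
  "circ R r = sqrt (R\<^sup>2 - r\<^sup>2)"

definition circ_slope :: "real \<Rightarrow> real \<Rightarrow> real" where
  "circ_slope R r = r / circ R r"

definition circ_slope_deriv :: "real \<Rightarrow> real \<Rightarrow> real" where
  "circ_slope_deriv R r = R\<^sup>2 / circ R r ^ 3"

lemma circ_pos: "\<bar>r\<bar> < R \<Longrightarrow> 0 < circ R r"
proof -
  assume "\<bar>r\<bar> < R"
  then have "\<bar>r\<bar>\<^sup>2 < R\<^sup>2" by (intro power_strict_mono) auto
  then show ?thesis by (simp add: circ_def)
qed

lemma circ_sq: "\<bar>r\<bar> \<le> R \<Longrightarrow> (circ R r)\<^sup>2 = R\<^sup>2 - r\<^sup>2"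
proof -
  assume "\<bar>r\<bar> \<le> R"
  then have "\<bar>r\<bar>\<^sup>2 \<le> R\<^sup>2" by (intro power_mono) auto
  then show ?thesis by (simp add: circ_def)
qed

lemma circ_antimono: "0 \<le> a \<Longrightarrow> a \<le> b \<Longrightarrow> circ R b \<le> circ R a"
  unfolding circ_def by (intro real_sqrt_le_mono diff_left_mono power_mono)

lemma DERIV_circ: "\<bar>r\<bar> < R \<Longrightarrow> (circ R has_real_derivative - circ_slope R r) (at r)"
proof -
  assume "\<bar>r\<bar> < R"
  then have c: "0 < circ R r" by (rule circ_pos)
  then have "0 < R\<^sup>2 - r\<^sup>2" by (simp add: circ_def)
  have "((\<lambda>r. R\<^sup>2 - r\<^sup>2) has_real_derivative - (2 * r)) (at r)"
    by (rule derivative_eq_intros refl | simp)+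
  from DERIV_chain2[OF DERIV_real_sqrt[OF \<open>0 < R\<^sup>2 - r\<^sup>2\<close>] this]
  have "(circ R has_real_derivative inverse (circ R r) / 2 * (- (2 * r))) (at r)"
    by (simp add: circ_def[abs_def])
  moreover have "inverse (circ R r) / 2 * (- (2 * r)) = - circ_slope R r"
    using c by (simp add: circ_slope_def field_simps)
  ultimately show ?thesis by simp
qed

lemma DERIV_circ_slope: "\<bar>r\<bar> < R \<Longrightarrow> (circ_slope R has_real_derivative circ_slope_deriv R r) (at r)"
proof -
  assume r: "\<bar>r\<bar> < R"
  have c: "0 < circ R r" using circ_pos[OF r] .
  have "(circ_slope R has_real_derivative (1 * circ R r - r * (- circ_slope R r)) / (circ R r * circ R r)) (at r)"
    unfolding circ_slope_def[abs_def] using c by (intro DERIV_divide DERIV_ident DERIV_circ[OF r, unfolded circ_slope_def]) auto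
  moreover have "(1 * circ R r - r * (- circ_slope R r)) / (circ R r * circ R r) = circ_slope_deriv R r"
    using c circ_sq[of r R] r
    by (simp add: circ_slope_def circ_slope_deriv_def field_simps power2_eq_square power3_eq_cube)
  ultimately show ?thesis by simp
qed

lemma circ_slope_nonneg: "0 \<le> r \<Longrightarrow> r < R \<Longrightarrow> 0 \<le> circ_slope R r"
  using circ_pos[of r R] by (simp add: circ_slope_def)

lemma circ_slope_mono:
  assumes "0 \<le> a" "a \<le> b" "b < R"
  shows "circ_slope R a \<le> circ_slope R b"
proof -
  have pos: "0 < circ R a" "0 < circ R b" using circ_pos[of a R] circ_pos[of b R] assms by auto
  have "a / circ R a \<le> b / circ R a" using pos assms by (simp add: divide_right_mono)
  also have "\<dots> \<le> b / circ R b"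
    using pos assms circ_antimono[of a b R] by (intro divide_left_mono) auto
  finally show ?thesis unfolding circ_slope_def .
qed

lemma circ_curvature:
  assumes "0 < R" "\<bar>r\<bar> < R"
  shows "circ_slope_deriv R r / (1 + (circ_slope R r)\<^sup>2) powr (3/2) = 1 / R"
proof -
  define c where "c = circ R r"
  have c: "0 < c" "c\<^sup>2 = R\<^sup>2 - r\<^sup>2" using circ_pos[OF assms(2)] circ_sq[of r R] assms(2)
    by (auto simp: c_def)
  have one_plus: "1 + (circ_slope R r)\<^sup>2 = (R / c)\<^sup>2"
    using c by (simp add: circ_slope_def c_def[symmetric] field_simps power2_eq_square)
  have "(1 + (circ_slope R r)\<^sup>2) powr (3/2) = (R / c)\<^sup>2 * (R / c)"
    unfolding one_plus using c assms(1) by (simp add: powr_three_halves)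
  then show ?thesis
    using c assms(1) by (simp add: circ_slope_deriv_def c_def[symmetric] field_simps power2_eq_square power3_eq_cube)
qed

lemma circ_concave:
  assumes "0 \<le> a" "a \<le> R" "0 \<le> b" "b \<le> R" "0 \<le> t" "t \<le> 1"
  shows "(1 - t) * circ R a + t * circ R b \<le> circ R ((1 - t) * a + t * b)"
proof -
  define A where "A = circ R a"
  define B where "B = circ R b"
  have A: "0 \<le> A" "A\<^sup>2 = R\<^sup>2 - a\<^sup>2" using circ_sq[of a R] assms by (auto simp: A_def circ_def)
  have B: "0 \<le> B" "B\<^sup>2 = R\<^sup>2 - b\<^sup>2" using circ_sq[of b R] assms by (auto simp: B_def circ_def)
  \<comment> \<open>Cauchy--Schwarz for the unit vectors \<open>(a, A)/R\<close> and \<open>(b, B)/R\<close>\<close>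
  have "(a*b + A*B)\<^sup>2 \<le> (a*b + A*B)\<^sup>2 + (a*B - A*b)\<^sup>2" by simp
  also have "\<dots> = (a\<^sup>2 + A\<^sup>2) * (b\<^sup>2 + B\<^sup>2)" by (simp add: power2_eq_square algebra_simps)
  also have "\<dots> = (R\<^sup>2)\<^sup>2" using A B by (simp add: power2_eq_square)
  finally have "a*b + A*B \<le> R\<^sup>2" using abs_le_square_iff[of "a*b + A*B" "R\<^sup>2"] by simp
  then have "0 \<le> 2 * (1 - t) * t * (R\<^sup>2 - a*b - A*B)" using assms(5,6) by simp
  also have "\<dots> = (1 - t)\<^sup>2 * (a\<^sup>2 + A\<^sup>2 - R\<^sup>2) + t\<^sup>2 * (b\<^sup>2 + B\<^sup>2 - R\<^sup>2)
      + R\<^sup>2 - ((1 - t) * a + t * b)\<^sup>2 - ((1 - t) * A + t * B)\<^sup>2"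
    by (simp add: power2_eq_square algebra_simps)
  finally have "((1 - t) * A + t * B)\<^sup>2 \<le> R\<^sup>2 - ((1 - t) * a + t * b)\<^sup>2"
    using A B by simp
  then have "(1 - t) * A + t * B \<le> sqrt (R\<^sup>2 - ((1 - t) * a + t * b)\<^sup>2)"
    by (rule real_le_rsqrt)
  then show ?thesis by (simp only: A_def B_def circ_def[of R "(1 - t) * a + t * b"])
qed

lemma phi_eq_circ: "phi \<alpha> p = -1 + 2*\<alpha> - circ (2*\<alpha>) (dDelta \<alpha> p)"
  unfolding phi_def circ_def by (simp add: power_mult_distrib)

lemma DERIV_circ_line:
  assumes "\<bar>d + t * a\<bar> < R"
  shows "((\<lambda>t. c - circ R (d + t * a)) has_real_derivative circ_slope R (d + t * a) * a) (at t)"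
proof -
  have "((\<lambda>t. d + t * a) has_real_derivative a) (at t)"
    by (auto intro!: derivative_eq_intros)
  from DERIV_diff[OF DERIV_const DERIV_chain2[OF DERIV_circ[OF assms] this]]
  show ?thesis by simp
qed

lemma DERIV_circ_slope_line:
  assumes "\<bar>d\<bar> < R"
  shows "((\<lambda>t. circ_slope R (d + t * a) * a) has_real_derivative circ_slope_deriv R d * a * a) (at 0)"
proof -
  have "((\<lambda>t. d + t * a) has_real_derivative a) (at 0)"
    by (auto intro!: derivative_eq_intros)
  from DERIV_cmult_right[OF DERIV_chain2[OF _ this], of "circ_slope R" "circ_slope_deriv R d" a]
  show ?thesis using DERIV_circ_slope[OF assms] by simp
qed

section \<open>The region \<open>Delta\<close>\<close>

definition theta :: "real \<Rightarrow> real \<Rightarrow> real" where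
  "theta \<alpha> x = (\<alpha>*pi/2) * (x - 1 + 3*\<alpha> + 1/\<alpha>)"

definition bdry :: "real \<Rightarrow> real \<Rightarrow> real" where
  "bdry \<alpha> x = -(2/(\<alpha>*pi)) * ln (cos (theta \<alpha> x))"

definition base :: "real \<Rightarrow> real set" where
  "base \<alpha> = {-2/\<alpha> + 1 - 3*\<alpha> <..< 1 - 3*\<alpha>}"

definition graph_pt :: "real \<Rightarrow> real \<Rightarrow> real \<times> real" where
  "graph_pt \<alpha> x = (x, bdry \<alpha> x)"

definition normal :: "real \<Rightarrow> real \<Rightarrow> real \<times> real" where
  "normal \<alpha> x = (sin (theta \<alpha> x), - cos (theta \<alpha> x))"

definition tangent :: "real \<Rightarrow> real \<Rightarrow> real \<times> real" where
  "tangent \<alpha> x = (cos (theta \<alpha> x), sin (theta \<alpha> x))"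

lemma Delta_epigraph: "Delta \<alpha> = epigraph (base \<alpha>) (bdry \<alpha>)"
  by (auto simp: Delta_def epigraph_def base_def bdry_def theta_def)

lemma mem_Delta: "(x, z) \<in> Delta \<alpha> \<longleftrightarrow> x \<in> base \<alpha> \<and> bdry \<alpha> x \<le> z"
  by (simp add: Delta_epigraph mem_epigraph)

lemma open_base: "open (base \<alpha>)"
  by (simp add: base_def)

lemma connected_base: "connected (base \<alpha>)"
  by (simp add: base_def)

lemma DERIV_theta: "(theta \<alpha> has_real_derivative \<alpha>*pi/2) (at x)"
  unfolding theta_def by (auto intro!: derivative_eq_intros)

lemma norm_normal: "norm (normal \<alpha> x) = 1"
  by (simp add: normal_def norm_Pair)

lemma inner_normal_self: "normal \<alpha> x \<bullet> normal \<alpha> x = 1"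
  using norm_normal[of \<alpha> x] by (simp add: dot_square_norm)

lemma inner_tangent_normal: "tangent \<alpha> x \<bullet> normal \<alpha> x = 0"
  by (simp add: tangent_def normal_def)

lemma dDelta_nonneg: "0 \<le> dDelta \<alpha> p"
  by (simp add: dDelta_def infdist_nonneg)

lemma phiDom_dDelta_le: "p \<in> phiDom \<alpha> \<Longrightarrow> dDelta \<alpha> p \<le> 2*\<alpha>"
proof -
  have "closed (DeltaNbhd \<alpha>)"
    unfolding DeltaNbhd_def dDelta_def by (intro closed_Collect_le continuous_intros)
  then have "phiDom \<alpha> \<subseteq> DeltaNbhd \<alpha>"
    unfolding phiDom_def by (simp add: closure_minimal)
  then show "p \<in> phiDom \<alpha> \<Longrightarrow> dDelta \<alpha> p \<le> 2*\<alpha>" by (auto simp: DeltaNbhd_def)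
qed

locale Delta_geometry =
  fixes \<alpha> :: real
  assumes alpha_pos: "0 < \<alpha>"
begin

lemma mem_base_iff: "x \<in> base \<alpha> \<longleftrightarrow> \<bar>theta \<alpha> x\<bar> < pi/2"
proof -
  have e1: "theta \<alpha> x + pi/2 = (\<alpha>*pi/2) * (x - (-2/\<alpha> + 1 - 3*\<alpha>))"
    and e2: "pi/2 - theta \<alpha> x = (\<alpha>*pi/2) * ((1 - 3*\<alpha>) - x)"
    using alpha_pos by (simp_all add: theta_def field_simps)
  have "0 < theta \<alpha> x + pi/2 \<longleftrightarrow> -2/\<alpha> + 1 - 3*\<alpha> < x"
    unfolding e1 using alpha_pos pi_gt_zero by (auto simp: zero_less_mult_iff mult_less_0_iff)
  moreover have "0 < pi/2 - theta \<alpha> x \<longleftrightarrow> x < 1 - 3*\<alpha>"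
    unfolding e2 using alpha_pos pi_gt_zero by (auto simp: zero_less_mult_iff mult_less_0_iff)
  ultimately show ?thesis by (auto simp: base_def abs_less_iff)
qed

lemma cos_theta_pos: "x \<in> base \<alpha> \<Longrightarrow> 0 < cos (theta \<alpha> x)"
  by (intro cos_gt_zero_pi) (auto simp: mem_base_iff)

lemma DERIV_bdry: "x \<in> base \<alpha> \<Longrightarrow> (bdry \<alpha> has_real_derivative tan (theta \<alpha> x)) (at x)"
proof -
  assume x: "x \<in> base \<alpha>"
  have c: "0 < cos (theta \<alpha> x)" using cos_theta_pos[OF x] .
  have "(bdry \<alpha> has_real_derivative -(2/(\<alpha>*pi)) * ((- sin (theta \<alpha> x) * (\<alpha>*pi/2)) / cos (theta \<alpha> x))) (at x)"
    unfolding bdry_def by (rule derivative_eq_intros DERIV_theta refl | use c in simp)+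
  moreover have "-(2/(\<alpha>*pi)) * ((- sin (theta \<alpha> x) * (\<alpha>*pi/2)) / cos (theta \<alpha> x)) = tan (theta \<alpha> x)"
    using alpha_pos by (simp add: tan_def field_simps)
  ultimately show ?thesis by simp
qed

lemma convex_on_bdry: "convex_on (base \<alpha>) (bdry \<alpha>)"
proof (rule convex_on_realI[where f' = "\<lambda>x. tan (theta \<alpha> x)"])
  show "connected (base \<alpha>)" by (rule connected_base)
  show "\<And>x. x \<in> base \<alpha> \<Longrightarrow> (bdry \<alpha> has_real_derivative tan (theta \<alpha> x)) (at x)"
    by (rule DERIV_bdry)
  fix x y assume xy: "x \<in> base \<alpha>" "y \<in> base \<alpha>" "x \<le> y"
  have "theta \<alpha> x \<le> theta \<alpha> y" using xy alpha_pos unfolding theta_def by (intro mult_left_mono) auto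
  then show "tan (theta \<alpha> x) \<le> tan (theta \<alpha> y)"
    using xy by (intro tan_mono_le) (auto simp: mem_base_iff)
qed

lemma bdry_above_tangent:
  assumes "x0 \<in> base \<alpha>" "x \<in> base \<alpha>"
  shows "tan (theta \<alpha> x0) * (x - x0) \<le> bdry \<alpha> x - bdry \<alpha> x0"
  using assms DERIV_bdry[OF assms(1)]
  by (intro convex_on_imp_above_tangent[OF convex_on_bdry connected_base])
     (auto simp: interior_open[OF open_base] has_field_derivative_at_within)

lemma convex_Delta: "convex (Delta \<alpha>)"
  unfolding Delta_epigraph by (rule convex_epigraphI[OF convex_on_bdry])

text \<open>At the ends of the base interval \<open>cos \<circ> theta\<close> vanishes, so the exponentiated
  inequality describes \<open>Delta\<close> by non-strict inequalities on a compact interval.\<close>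
lemma Delta_closed_form:
  "Delta \<alpha> = {w. -2/\<alpha> + 1 - 3*\<alpha> \<le> fst w \<and> fst w \<le> 1 - 3*\<alpha> \<and>
     exp (- snd w * (\<alpha>*pi/2)) \<le> cos (theta \<alpha> (fst w))}"
proof (intro set_eqI iffI)
  fix w :: "real \<times> real"
  obtain x z where w: "w = (x, z)" by fastforce
  {
    assume "w \<in> Delta \<alpha>"
    then have x: "x \<in> base \<alpha>" and "bdry \<alpha> x \<le> z" by (auto simp: w mem_Delta)
    then have "- z * (\<alpha>*pi/2) \<le> ln (cos (theta \<alpha> x))"
      using alpha_pos by (simp add: bdry_def field_simps)
    then have "exp (- z * (\<alpha>*pi/2)) \<le> exp (ln (cos (theta \<alpha> x)))" by simp
    then have "exp (- z * (\<alpha>*pi/2)) \<le> cos (theta \<alpha> x)" using cos_theta_pos[OF x] by simp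
    then show "w \<in> {w. -2/\<alpha> + 1 - 3*\<alpha> \<le> fst w \<and> fst w \<le> 1 - 3*\<alpha> \<and>
        exp (- snd w * (\<alpha>*pi/2)) \<le> cos (theta \<alpha> (fst w))}"
      using x by (auto simp: w base_def)
  next
    assume "w \<in> {w. -2/\<alpha> + 1 - 3*\<alpha> \<le> fst w \<and> fst w \<le> 1 - 3*\<alpha> \<and>
        exp (- snd w * (\<alpha>*pi/2)) \<le> cos (theta \<alpha> (fst w))}"
    then have h: "-2/\<alpha> + 1 - 3*\<alpha> \<le> x" "x \<le> 1 - 3*\<alpha>" "exp (- z * (\<alpha>*pi/2)) \<le> cos (theta \<alpha> x)"
      by (auto simp: w)
    have c: "0 < cos (theta \<alpha> x)" using h(3) by (meson exp_gt_zero less_le_trans)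
    have "theta \<alpha> (-2/\<alpha> + 1 - 3*\<alpha>) = -(pi/2)" "theta \<alpha> (1 - 3*\<alpha>) = pi/2"
      using alpha_pos by (auto simp: theta_def field_simps)
    then have "cos (theta \<alpha> (-2/\<alpha> + 1 - 3*\<alpha>)) = 0" "cos (theta \<alpha> (1 - 3*\<alpha>)) = 0"
      by (metis cos_pi_half cos_minus)+
    then have "x \<noteq> -2/\<alpha> + 1 - 3*\<alpha>" "x \<noteq> 1 - 3*\<alpha>" using c by auto
    then have x: "x \<in> base \<alpha>" using h by (auto simp: base_def)
    have "ln (exp (- z * (\<alpha>*pi/2))) \<le> ln (cos (theta \<alpha> x))"
      using h(3) c by (subst ln_le_cancel_iff) auto
    then have "- z * (\<alpha>*pi/2) \<le> ln (cos (theta \<alpha> x))" by simp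
    then have "bdry \<alpha> x \<le> z" using alpha_pos by (simp add: bdry_def field_simps)
    then show "w \<in> Delta \<alpha>" using x by (simp add: w mem_Delta)
  }
qed

lemma closed_Delta: "closed (Delta \<alpha>)"
  unfolding Delta_closed_form Collect_conj_eq theta_def
  by (intro closed_Int closed_Collect_le continuous_intros)

lemma graph_pt_in_Delta: "x \<in> base \<alpha> \<Longrightarrow> graph_pt \<alpha> x \<in> Delta \<alpha>"
  by (simp add: graph_pt_def mem_Delta)

lemma Delta_nonempty: "Delta \<alpha> \<noteq> {}"
proof -
  have "1 - 3*\<alpha> - 1/\<alpha> \<in> base \<alpha>" using alpha_pos by (auto simp: base_def divide_strict_right_mono)
  then show ?thesis using graph_pt_in_Delta by blast
qed

lemma open_above_graph: "open {w. fst w \<in> base \<alpha> \<and> bdry \<alpha> (fst w) < snd w}"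
proof -
  let ?S = "fst -` base \<alpha> :: (real \<times> real) set"
  have "continuous_on ?S (\<lambda>w. snd w - bdry \<alpha> (fst w))"
    unfolding bdry_def
  proof (intro continuous_intros)
    show "continuous_on ?S (\<lambda>w. theta \<alpha> (fst w))"
      unfolding theta_def by (intro continuous_intros)
    show "\<forall>w\<in>?S. cos (theta \<alpha> (fst w)) \<noteq> 0"
      using cos_theta_pos by (metis less_irrefl vimageE)
  qed
  then have "open (?S \<inter> (\<lambda>w. snd w - bdry \<alpha> (fst w)) -` {0<..})"
    using open_base by (intro continuous_open_preimage open_vimage_fst) auto
  moreover have "?S \<inter> (\<lambda>w. snd w - bdry \<alpha> (fst w)) -` {0<..} = {w. fst w \<in> base \<alpha> \<and> bdry \<alpha> (fst w) < snd w}"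
    by auto
  ultimately show ?thesis by simp
qed

lemma Delta_below_tangent_line:
  assumes "x0 \<in> base \<alpha>" "q \<in> Delta \<alpha>"
  shows "(q - graph_pt \<alpha> x0) \<bullet> normal \<alpha> x0 \<le> 0"
proof -
  obtain y z where q: "q = (y, z)" by fastforce
  have y: "y \<in> base \<alpha>" "bdry \<alpha> y \<le> z" using assms(2) by (auto simp: q mem_Delta)
  let ?s = "sin (theta \<alpha> x0)" and ?c = "cos (theta \<alpha> x0)"
  have c: "0 < ?c" using cos_theta_pos[OF assms(1)] .
  have "(y - x0) * ?s = tan (theta \<alpha> x0) * (y - x0) * ?c" using c by (simp add: tan_def)
  also have "\<dots> \<le> (z - bdry \<alpha> x0) * ?c"
    using bdry_above_tangent[OF assms(1) y(1)] y(2) c by (intro mult_right_mono) auto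
  finally show ?thesis by (simp add: q graph_pt_def normal_def algebra_simps)
qed

lemma normal_component_le_dDelta:
  assumes "x0 \<in> base \<alpha>"
  shows "(p - graph_pt \<alpha> x0) \<bullet> normal \<alpha> x0 \<le> dDelta \<alpha> p"
proof -
  obtain q where q: "q \<in> Delta \<alpha>" "dDelta \<alpha> p = dist p q"
    using infdist_attains_inf[OF closed_Delta Delta_nonempty] unfolding dDelta_def by blast
  have "(p - graph_pt \<alpha> x0) \<bullet> normal \<alpha> x0 = (p - q) \<bullet> normal \<alpha> x0 + (q - graph_pt \<alpha> x0) \<bullet> normal \<alpha> x0"
    by (simp add: inner_diff_left)
  also have "\<dots> \<le> norm (p - q) * norm (normal \<alpha> x0) + 0"
    using Delta_below_tangent_line[OF assms q(1)] by (intro add_mono norm_cauchy_schwarz)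
  finally show ?thesis using q(2) by (simp add: norm_normal dist_norm)
qed

lemma nearest_point_on_graph:
  assumes "p \<notin> Delta \<alpha>"
  obtains x0 where "x0 \<in> base \<alpha>" "dDelta \<alpha> p = dist p (graph_pt \<alpha> x0)"
proof -
  obtain q where q: "q \<in> Delta \<alpha>" "dDelta \<alpha> p = dist p q"
    using infdist_attains_inf[OF closed_Delta Delta_nonempty] unfolding dDelta_def by blast
  obtain x0 z0 where qq: "q = (x0, z0)" by fastforce
  have x0: "x0 \<in> base \<alpha>" "bdry \<alpha> x0 \<le> z0" using q(1) by (auto simp: qq mem_Delta)
  have "z0 = bdry \<alpha> x0"
  proof (rule ccontr)
    assume "z0 \<noteq> bdry \<alpha> x0"
    then have "q \<in> {w. fst w \<in> base \<alpha> \<and> bdry \<alpha> (fst w) < snd w}" using x0 by (auto simp: qq)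
    from eventually_line_in_open[OF open_above_graph this, of "p - q"]
    obtain \<epsilon> where \<epsilon>: "0 < \<epsilon>"
      "\<And>t. dist t 0 < \<epsilon> \<Longrightarrow> q + t *\<^sub>R (p - q) \<in> {w. fst w \<in> base \<alpha> \<and> bdry \<alpha> (fst w) < snd w}"
      unfolding eventually_nhds_metric by blast
    define t where "t = min (\<epsilon>/2) (1/2)"
    have t: "0 < t" "t < 1" "dist t 0 < \<epsilon>" using \<epsilon>(1) by (auto simp: t_def)
    \<comment> \<open>moving from \<open>q\<close> towards \<open>p\<close> stays inside \<open>Delta\<close> and gets closer to \<open>p\<close>\<close>
    have "q + t *\<^sub>R (p - q) \<in> Delta \<alpha>"
      using \<epsilon>(2)[OF t(3)] by (cases "q + t *\<^sub>R (p - q)") (auto simp: mem_Delta)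
    then have "dist p q \<le> dist p (q + t *\<^sub>R (p - q))"
      using q(2) unfolding dDelta_def by (metis infdist_le)
    also have "p - (q + t *\<^sub>R (p - q)) = (1 - t) *\<^sub>R (p - q)" by (simp add: algebra_simps)
    then have "dist p (q + t *\<^sub>R (p - q)) = (1 - t) * dist p q" using t by (simp add: dist_norm)
    finally have "t * dist p q \<le> 0" by (simp add: algebra_simps)
    then have "p = q" using t(1) by (simp add: mult_le_0_iff)
    then show False using assms q(1) by simp
  qed
  then show ?thesis using that x0(1) q(2) by (simp add: qq graph_pt_def)
qed

lemma nearest_graph_point_first_order:
  assumes x0: "x0 \<in> base \<alpha>"
    and closest: "\<And>x. x \<in> base \<alpha> \<Longrightarrow> dist p (graph_pt \<alpha> x0) \<le> dist p (graph_pt \<alpha> x)"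
  shows "fst p - x0 = (bdry \<alpha> x0 - snd p) * tan (theta \<alpha> x0)"
proof -
  obtain p1 p2 where pp: "p = (p1, p2)" by fastforce
  define h where "h x = (p1 - x)\<^sup>2 + (p2 - bdry \<alpha> x)\<^sup>2" for x
  have dist_h: "dist p (graph_pt \<alpha> x) = sqrt (h x)" for x
    by (simp add: pp graph_pt_def h_def dist_Pair_Pair dist_real_def)
  have "\<forall>\<^sub>F x in nhds x0. h x0 \<le> h x"
    using eventually_nhds_in_open[OF open_base x0]
    by eventually_elim (metis closest dist_h real_sqrt_le_iff)
  moreover have "(h has_real_derivative 2 * (p1 - x0) * (-1) + 2 * (p2 - bdry \<alpha> x0) * (- tan (theta \<alpha> x0))) (at x0)"
    unfolding h_def by (rule derivative_eq_intros DERIV_bdry[OF x0] refl)+ (simp add: power2_eq_square)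
  ultimately have "2 * (p1 - x0) * (-1) + 2 * (p2 - bdry \<alpha> x0) * (- tan (theta \<alpha> x0)) = 0"
    by (intro DERIV_local_min_nhds)
  then show ?thesis by (simp add: pp algebra_simps)
qed

lemma foot_point:
  assumes "0 < dDelta \<alpha> p"
  obtains x0 where "x0 \<in> base \<alpha>" "p = graph_pt \<alpha> x0 + dDelta \<alpha> p *\<^sub>R normal \<alpha> x0"
proof -
  define d where "d = dDelta \<alpha> p"
  have "p \<notin> Delta \<alpha>" using assms by (auto simp: dDelta_def)
  then obtain x0 where x0: "x0 \<in> base \<alpha>" and d_eq: "d = dist p (graph_pt \<alpha> x0)"
    unfolding d_def by (rule nearest_point_on_graph)
  obtain p1 p2 where pp: "p = (p1, p2)" by fastforce
  let ?s = "sin (theta \<alpha> x0)" and ?c = "cos (theta \<alpha> x0)"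
  have c: "0 < ?c" using cos_theta_pos[OF x0] .
  have "d \<le> dist p (graph_pt \<alpha> x)" if "x \<in> base \<alpha>" for x
    unfolding d_def dDelta_def using graph_pt_in_Delta[OF that] by (rule infdist_le)
  then have foc: "p1 - x0 = (bdry \<alpha> x0 - p2) * ?s / ?c"
    using nearest_graph_point_first_order[OF x0, of p] d_eq by (simp add: pp tan_def)
  have below: "p2 \<le> bdry \<alpha> x0"
  proof (rule ccontr)
    assume above: "\<not> p2 \<le> bdry \<alpha> x0"
    then have "d \<le> dist p (x0, p2)"
      unfolding d_def dDelta_def using x0 by (intro infdist_le) (simp add: mem_Delta)
    also have "\<dots> = sqrt ((p1 - x0)\<^sup>2)" by (simp add: pp dist_Pair_Pair dist_real_def)
    also have "\<dots> < sqrt ((p1 - x0)\<^sup>2 + (p2 - bdry \<alpha> x0)\<^sup>2)"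
      using above by (intro real_sqrt_less_mono) simp
    also have "\<dots> = d" by (simp add: d_eq pp graph_pt_def dist_Pair_Pair dist_real_def)
    finally show False by simp
  qed
  define l where "l = bdry \<alpha> x0 - p2"
  have p_minus: "p - graph_pt \<alpha> x0 = (l / ?c) *\<^sub>R normal \<alpha> x0"
    using foc c by (simp add: pp graph_pt_def normal_def l_def field_simps)
  moreover have "0 \<le> l" using below by (simp add: l_def)
  ultimately have "d = l / ?c" using d_eq c by (simp add: dist_norm norm_normal)
  then have "p = graph_pt \<alpha> x0 + d *\<^sub>R normal \<alpha> x0"
    using p_minus by (metis add.commute diff_add_cancel)
  then show ?thesis using that x0 by (simp add: d_def)
qed

lemma convex_on_phi:
  assumes "C \<subseteq> phiDom \<alpha>" "convex C"
  shows "convex_on C (phi \<alpha>)"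
proof (rule convex_onI[OF _ assms(2)])
  fix t :: real and x y assume t: "0 < t" "t < 1" and xy: "x \<in> C" "y \<in> C"
  define a where "a = dDelta \<alpha> x"
  define b where "b = dDelta \<alpha> y"
  have "x \<in> phiDom \<alpha>" "y \<in> phiDom \<alpha>" using xy assms(1) by auto
  then have a: "0 \<le> a" "a \<le> 2*\<alpha>" and b: "0 \<le> b" "b \<le> 2*\<alpha>"
    by (simp_all add: a_def b_def dDelta_nonneg phiDom_dDelta_le)
  have "dDelta \<alpha> ((1 - t) *\<^sub>R x + t *\<^sub>R y) \<le> (1 - t) * a + t * b"
    unfolding a_def b_def dDelta_def
    using convex_onD[OF convex_on_infdist[OF convex_Delta closed_Delta Delta_nonempty], of t x y] t
    by simp
  then have "circ (2*\<alpha>) ((1 - t) * a + t * b) \<le> circ (2*\<alpha>) (dDelta \<alpha> ((1 - t) *\<^sub>R x + t *\<^sub>R y))"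
    by (rule circ_antimono[OF dDelta_nonneg])
  moreover have "(1 - t) * circ (2*\<alpha>) a + t * circ (2*\<alpha>) b \<le> circ (2*\<alpha>) ((1 - t) * a + t * b)"
    using a b t by (intro circ_concave) auto
  ultimately show "phi \<alpha> ((1 - t) *\<^sub>R x + t *\<^sub>R y) \<le> (1 - t) * phi \<alpha> x + t * phi \<alpha> y"
    unfolding phi_eq_circ a_def b_def by (simp add: algebra_simps)
qed

end

text \<open>\<open>gap \<alpha> x0 t\<close> is the height of the graph above the point \<open>graph_pt \<alpha> x0 + t *\<^sub>R tangent \<alpha> x0\<close>
  of its tangent line, and \<open>gap'\<close> its derivative in \<open>t\<close>.\<close>
definition gap :: "real \<Rightarrow> real \<Rightarrow> real \<Rightarrow> real" where
  "gap \<alpha> x0 t = bdry \<alpha> (x0 + t * cos (theta \<alpha> x0)) - bdry \<alpha> x0 - t * sin (theta \<alpha> x0)"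

definition gap' :: "real \<Rightarrow> real \<Rightarrow> real \<Rightarrow> real" where
  "gap' \<alpha> x0 t = tan (theta \<alpha> (x0 + t * cos (theta \<alpha> x0))) * cos (theta \<alpha> x0) - sin (theta \<alpha> x0)"

text \<open>The squared distance from \<open>graph_pt \<alpha> x0 + d *\<^sub>R normal \<alpha> x0 + t *\<^sub>R tangent \<alpha> x0\<close>
  to the graph point vertically above \<open>graph_pt \<alpha> x0 + t *\<^sub>R tangent \<alpha> x0\<close>.\<close>
definition graph_dist_sq :: "real \<Rightarrow> real \<Rightarrow> real \<Rightarrow> real \<Rightarrow> real" where
  "graph_dist_sq \<alpha> x0 d t = (d * sin (theta \<alpha> x0))\<^sup>2 + (d * cos (theta \<alpha> x0) + gap \<alpha> x0 t)\<^sup>2"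

definition tangent_barrier_slope :: "real \<Rightarrow> real \<Rightarrow> real \<Rightarrow> real \<Rightarrow> real" where
  "tangent_barrier_slope \<alpha> x0 d t =
     (d * cos (theta \<alpha> x0) + gap \<alpha> x0 t) * gap' \<alpha> x0 t / sqrt (4*\<alpha>^2 - graph_dist_sq \<alpha> x0 d t)"

lemma gap_0: "gap \<alpha> x0 0 = 0"
  by (simp add: gap_def)

lemma graph_dist_sq_0: "graph_dist_sq \<alpha> x0 d 0 = d\<^sup>2"
proof -
  have "graph_dist_sq \<alpha> x0 d 0 = d\<^sup>2 * (sin (theta \<alpha> x0))\<^sup>2 + d\<^sup>2 * (cos (theta \<alpha> x0))\<^sup>2"
    by (simp add: graph_dist_sq_def gap_0 power_mult_distrib)
  also have "\<dots> = d\<^sup>2 * ((sin (theta \<alpha> x0))\<^sup>2 + (cos (theta \<alpha> x0))\<^sup>2)"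
    by (rule distrib_left[symmetric])
  finally show ?thesis by simp
qed

context Delta_geometry
begin

lemma gap'_0: "x0 \<in> base \<alpha> \<Longrightarrow> gap' \<alpha> x0 0 = 0"
  using cos_theta_pos[of x0] by (simp add: gap'_def tan_def)

lemma DERIV_gap:
  assumes "x0 + t * cos (theta \<alpha> x0) \<in> base \<alpha>"
  shows "(gap \<alpha> x0 has_real_derivative gap' \<alpha> x0 t) (at t)"
proof -
  have "((\<lambda>t. bdry \<alpha> (x0 + t * cos (theta \<alpha> x0))) has_real_derivative
      tan (theta \<alpha> (x0 + t * cos (theta \<alpha> x0))) * cos (theta \<alpha> x0)) (at t)"
    by (rule DERIV_chain2[where g = "\<lambda>t. x0 + t * cos (theta \<alpha> x0)", OF DERIV_bdry[OF assms]])
      (auto intro!: derivative_eq_intros)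
  then show ?thesis
    unfolding gap_def[abs_def] gap'_def by (auto intro!: derivative_eq_intros)
qed

text \<open>The second derivative of \<open>gap\<close> at \<open>0\<close> is \<open>bdry''(x0) cos\<^sup>2(theta x0)\<close>,
  which equals \<open>\<alpha>\<pi>/2\<close> because \<open>bdry' = tan \<circ> theta\<close> and \<open>theta' = \<alpha>\<pi>/2\<close>.\<close>
lemma DERIV_gap'_0:
  assumes x0: "x0 \<in> base \<alpha>"
  shows "(gap' \<alpha> x0 has_real_derivative \<alpha>*pi/2) (at 0)"
proof -
  let ?c = "cos (theta \<alpha> x0)"
  have c: "0 < ?c" using cos_theta_pos[OF x0] .
  have th: "((\<lambda>t. theta \<alpha> (x0 + t * ?c)) has_real_derivative \<alpha>*pi/2 * ?c) (at 0)"
    by (rule DERIV_chain2[where g = "\<lambda>t. x0 + t * ?c", OF DERIV_theta]) (auto intro!: derivative_eq_intros)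
  have "((\<lambda>t. tan (theta \<alpha> (x0 + t * ?c))) has_real_derivative
      inverse ((cos (theta \<alpha> (x0 + 0 * ?c)))\<^sup>2) * (\<alpha>*pi/2 * ?c)) (at 0)"
    by (intro DERIV_chain2[OF DERIV_tan] th) (use c in auto)
  then have D: "(gap' \<alpha> x0 has_real_derivative
      inverse ((cos (theta \<alpha> (x0 + 0 * ?c)))\<^sup>2) * (\<alpha>*pi/2 * ?c) * ?c - 0) (at 0)"
    unfolding gap'_def[abs_def] by (intro DERIV_diff DERIV_cmult_right DERIV_const)
  have eq: "inverse ((cos (theta \<alpha> (x0 + 0 * ?c)))\<^sup>2) * (\<alpha>*pi/2 * ?c) * ?c - 0 = \<alpha>*pi/2"
    using c by (simp add: field_simps power2_eq_square)
  show ?thesis using D unfolding eq .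
qed

lemma DERIV_graph_dist_sq:
  assumes "x0 + t * cos (theta \<alpha> x0) \<in> base \<alpha>"
  shows "(graph_dist_sq \<alpha> x0 d has_real_derivative
      2 * (d * cos (theta \<alpha> x0) + gap \<alpha> x0 t) * gap' \<alpha> x0 t) (at t)"
  unfolding graph_dist_sq_def[abs_def]
  by (rule derivative_eq_intros DERIV_gap[OF assms] refl | simp)+

lemma dDelta_le_graph_dist:
  assumes "x0 + t * cos (theta \<alpha> x0) \<in> base \<alpha>"
  shows "dDelta \<alpha> (graph_pt \<alpha> x0 + d *\<^sub>R normal \<alpha> x0 + t *\<^sub>R tangent \<alpha> x0)
    \<le> sqrt (graph_dist_sq \<alpha> x0 d t)"
proof -
  let ?q = "graph_pt \<alpha> x0 + d *\<^sub>R normal \<alpha> x0 + t *\<^sub>R tangent \<alpha> x0"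
  have "dDelta \<alpha> ?q \<le> dist ?q (graph_pt \<alpha> (x0 + t * cos (theta \<alpha> x0)))"
    unfolding dDelta_def by (rule infdist_le[OF graph_pt_in_Delta[OF assms]])
  also have "?q - graph_pt \<alpha> (x0 + t * cos (theta \<alpha> x0))
      = (d * sin (theta \<alpha> x0), - (d * cos (theta \<alpha> x0) + gap \<alpha> x0 t))"
    by (simp add: graph_pt_def normal_def tangent_def gap_def)
  then have "dist ?q (graph_pt \<alpha> (x0 + t * cos (theta \<alpha> x0))) = sqrt (graph_dist_sq \<alpha> x0 d t)"
    by (simp add: dist_norm norm_Pair graph_dist_sq_def power2_eq_square algebra_simps)
  finally show ?thesis .
qed

lemma DERIV_tangent_barrier:
  assumes "x0 + t * cos (theta \<alpha> x0) \<in> base \<alpha>" "graph_dist_sq \<alpha> x0 d t < 4*\<alpha>^2"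
  shows "((\<lambda>t. -1 + 2*\<alpha> - sqrt (4*\<alpha>^2 - graph_dist_sq \<alpha> x0 d t)) has_real_derivative
      tangent_barrier_slope \<alpha> x0 d t) (at t)"
proof -
  have pos: "0 < 4*\<alpha>^2 - graph_dist_sq \<alpha> x0 d t" using assms(2) by simp
  from DERIV_chain2[OF DERIV_real_sqrt[OF pos] DERIV_diff[OF DERIV_const DERIV_graph_dist_sq[OF assms(1)]]]
  have "((\<lambda>t. -1 + 2*\<alpha> - sqrt (4*\<alpha>^2 - graph_dist_sq \<alpha> x0 d t)) has_real_derivative
      0 - inverse (sqrt (4*\<alpha>^2 - graph_dist_sq \<alpha> x0 d t)) / 2
        * (0 - 2 * (d * cos (theta \<alpha> x0) + gap \<alpha> x0 t) * gap' \<alpha> x0 t)) (at t)"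
    by (intro DERIV_diff DERIV_const)
  moreover have "0 - inverse (sqrt (4*\<alpha>^2 - graph_dist_sq \<alpha> x0 d t)) / 2
        * (0 - 2 * (d * cos (theta \<alpha> x0) + gap \<alpha> x0 t) * gap' \<alpha> x0 t)
      = tangent_barrier_slope \<alpha> x0 d t"
    using pos by (simp add: tangent_barrier_slope_def field_simps)
  ultimately show ?thesis by simp
qed

lemma DERIV_tangent_barrier_slope_0:
  assumes x0: "x0 \<in> base \<alpha>" and d: "0 < d" "d < 2*\<alpha>"
  shows "(tangent_barrier_slope \<alpha> x0 d has_real_derivative
      circ_slope (2*\<alpha>) d * (\<alpha>*pi/2) * cos (theta \<alpha> x0)) (at 0)"
proof -
  let ?c = "cos (theta \<alpha> x0)"
  define S where "S t = sqrt (4*\<alpha>^2 - graph_dist_sq \<alpha> x0 d t)" for t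
  have x00: "x0 + 0 * ?c \<in> base \<alpha>" using x0 by simp
  have S0: "S 0 = circ (2*\<alpha>) d" by (simp add: S_def graph_dist_sq_0 circ_def power_mult_distrib)
  have S0_pos: "0 < S 0" unfolding S0 using d by (intro circ_pos) auto
  have sq_pos: "0 < 4*\<alpha>^2 - graph_dist_sq \<alpha> x0 d 0" using S0_pos by (simp add: S_def)
  have "((\<lambda>t. d * ?c + gap \<alpha> x0 t) has_real_derivative 0) (at 0)"
    using DERIV_gap[OF x00] gap'_0[OF x0] by (auto intro!: derivative_eq_intros)
  from DERIV_mult[OF this DERIV_gap'_0[OF x0]]
  have N: "((\<lambda>t. (d * ?c + gap \<alpha> x0 t) * gap' \<alpha> x0 t) has_real_derivative
      0 * gap' \<alpha> x0 0 + \<alpha>*pi/2 * (d * ?c + gap \<alpha> x0 0)) (at 0)" .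
  have "((\<lambda>t. 4*\<alpha>^2 - graph_dist_sq \<alpha> x0 d t) has_real_derivative 0) (at 0)"
    using DERIV_graph_dist_sq[OF x00, of d] gap'_0[OF x0] by (auto intro!: derivative_eq_intros)
  from DERIV_chain2[OF DERIV_real_sqrt[OF sq_pos] this]
  have S: "(S has_real_derivative 0) (at 0)" by (simp add: S_def[abs_def])
  have "tangent_barrier_slope \<alpha> x0 d = (\<lambda>t. (d * ?c + gap \<alpha> x0 t) * gap' \<alpha> x0 t / S t)"
    by (simp add: fun_eq_iff tangent_barrier_slope_def S_def)
  with DERIV_divide[OF N S] S0_pos
  have D: "(tangent_barrier_slope \<alpha> x0 d has_real_derivative d * ?c * (\<alpha>*pi/2) / S 0) (at 0)"
    by (simp add: gap_0 gap'_0[OF x0] field_simps power2_eq_square)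
  have eq: "d * ?c * (\<alpha>*pi/2) / S 0 = circ_slope (2*\<alpha>) d * (\<alpha>*pi/2) * ?c"
    by (simp add: S0 circ_slope_def mult_ac)
  show ?thesis using D unfolding eq .
qed

lemma eventually_graph_dist_sq_less:
  assumes x0: "x0 \<in> base \<alpha>" and d: "0 < d" "d < 2*\<alpha>"
  shows "\<forall>\<^sub>F t in nhds 0. graph_dist_sq \<alpha> x0 d t < 4*\<alpha>^2"
proof -
  have "d\<^sup>2 < (2*\<alpha>)\<^sup>2" using d by (intro power_strict_mono) auto
  then have "graph_dist_sq \<alpha> x0 d 0 < 4*\<alpha>^2" by (simp add: graph_dist_sq_0 power_mult_distrib)
  moreover have "isCont (graph_dist_sq \<alpha> x0 d) 0"
    by (rule DERIV_isCont[OF DERIV_graph_dist_sq]) (simp add: x0)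
  ultimately show ?thesis
    by (simp add: isCont_def tendsto_at_iff_tendsto_nhds order_tendstoD)
qed

end

section \<open>Derivatives of \<open>phi\<close>\<close>

locale phi_gradient = Delta_geometry +
  fixes U :: "(real \<times> real) set" and G :: "real \<times> real \<Rightarrow> real \<times> real"
  assumes open_U: "open U" and U_sub_phiDom: "U \<subseteq> phiDom \<alpha>"
    and has_gradient: "q \<in> U \<Longrightarrow> (phi \<alpha> has_derivative (\<lambda>h. G q \<bullet> h)) (at q)"
begin

lemma dDelta_pos:
  assumes "p \<in> U"
  shows "0 < dDelta \<alpha> p"
proof (rule ccontr)
  assume "\<not> 0 < dDelta \<alpha> p"
  then have "p \<in> Delta \<alpha>"
    using dDelta_nonneg[of \<alpha> p] in_closed_iff_infdist_zero[OF closed_Delta Delta_nonempty]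
    by (auto simp: dDelta_def)
  \<comment> \<open>points just above \<open>p\<close> lie in the open set \<open>?A \<subseteq> Delta \<alpha>\<close>, which misses \<open>phiDom \<alpha>\<close>\<close>
  let ?A = "{w. fst w \<in> base \<alpha> \<and> bdry \<alpha> (fst w) < snd w}"
  obtain \<epsilon> where \<epsilon>: "0 < \<epsilon>" "\<forall>t. dist t 0 < \<epsilon> \<longrightarrow> p + t *\<^sub>R (0, 1) \<in> U"
    using eventually_line_in_open[OF open_U assms, of "(0, 1)"] unfolding eventually_nhds_metric by blast
  then have "p + (\<epsilon>/2) *\<^sub>R (0, 1) \<in> U" by auto
  moreover have "p + (\<epsilon>/2) *\<^sub>R (0, 1) \<in> ?A"
    using \<open>p \<in> Delta \<alpha>\<close> \<epsilon>(1) by (auto simp: Delta_epigraph epigraph_def)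
  moreover have "?A \<inter> phiDom \<alpha> = {}"
    unfolding phiDom_def open_Int_closure_eq_empty[OF open_above_graph]
    by (auto simp: Delta_epigraph epigraph_def)
  ultimately show False using U_sub_phiDom by blast
qed

lemma dDelta_less:
  assumes "p \<in> U"
  shows "dDelta \<alpha> p < 2*\<alpha>"
proof (rule ccontr)
  assume "\<not> dDelta \<alpha> p < 2*\<alpha>"
  then have dp: "dDelta \<alpha> p = 2*\<alpha>"
    using phiDom_dDelta_le[of p \<alpha>] U_sub_phiDom assms by force
  obtain q where q: "q \<in> Delta \<alpha>" "dDelta \<alpha> p = dist p q"
    using infdist_attains_inf[OF closed_Delta Delta_nonempty] unfolding dDelta_def by blast
  define v where "v = (1/(2*\<alpha>)) *\<^sub>R (q - p)"
  \<comment> \<open>along the segment towards the nearest point \<open>phi\<close> has a vertical tangent at \<open>p\<close>\<close>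
  have "phi \<alpha> (p + t *\<^sub>R v) = phi \<alpha> p - sqrt (2 * (2*\<alpha>) * t - t\<^sup>2)" if "0 \<le> t" "t \<le> 2*\<alpha>" for t
  proof -
    have "p + t *\<^sub>R v = p + (t / dist p q) *\<^sub>R (q - p)" using q(2) dp by (simp add: v_def)
    then have "dDelta \<alpha> (p + t *\<^sub>R v) = 2*\<alpha> - t"
      using infdist_towards_nearest[of q "Delta \<alpha>" p t] q dp that by (simp add: dDelta_def)
    moreover have "4*\<alpha>^2 - (2*\<alpha> - t)\<^sup>2 = 2 * (2*\<alpha>) * t - t\<^sup>2"
      by (simp add: power2_eq_square algebra_simps)
    ultimately show ?thesis using dp by (simp add: phi_def power_mult_distrib)
  qed
  moreover have "((\<lambda>t. phi \<alpha> (p + t *\<^sub>R v)) has_real_derivative G p \<bullet> v) (at 0)"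
    by (rule has_real_derivative_along_line) (simp add: has_gradient assms)
  ultimately show False
    using not_DERIV_circle_cusp[of "2*\<alpha>" "\<lambda>t. phi \<alpha> (p + t *\<^sub>R v)"] alpha_pos by auto
qed

lemma lower_barrier:
  assumes "p \<in> U" "x0 \<in> base \<alpha>" and p: "p = graph_pt \<alpha> x0 + dDelta \<alpha> p *\<^sub>R normal \<alpha> x0"
  shows "G p \<bullet> v = circ_slope (2*\<alpha>) (dDelta \<alpha> p) * (v \<bullet> normal \<alpha> x0)"
    and "(G has_derivative H) (at p) \<Longrightarrow>
      circ_slope_deriv (2*\<alpha>) (dDelta \<alpha> p) * (v \<bullet> normal \<alpha> x0)\<^sup>2 \<le> H v \<bullet> v"
proof -
  define d where "d = dDelta \<alpha> p"
  define a where "a = v \<bullet> normal \<alpha> x0"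
  define b where "b t = -1 + 2*\<alpha> - circ (2*\<alpha>) (d + t * a)" for t
  have d: "0 < d" "d < 2*\<alpha>" using dDelta_pos dDelta_less assms(1) by (auto simp: d_def)
  have "\<forall>\<^sub>F t in nhds 0. p + t *\<^sub>R v \<in> U \<and> d + t *\<^sub>R a \<in> {0<..<2*\<alpha>}"
    using d by (intro eventually_conj eventually_line_in_open open_U assms(1)) auto
  then have near: "\<forall>\<^sub>F t in nhds 0. (phi \<alpha> has_derivative (\<lambda>h. G (p + t *\<^sub>R v) \<bullet> h)) (at (p + t *\<^sub>R v))
      \<and> (b has_real_derivative circ_slope (2*\<alpha>) (d + t * a) * a) (at t)
      \<and> 0 \<le> 1 * (phi \<alpha> (p + t *\<^sub>R v) - b t)"
  proof eventually_elim
    case (elim t)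
    have "d + t * a = (p + t *\<^sub>R v - graph_pt \<alpha> x0) \<bullet> normal \<alpha> x0"
      by (subst p) (simp add: d_def a_def inner_add_left inner_normal_self)
    also have "\<dots> \<le> dDelta \<alpha> (p + t *\<^sub>R v)" by (rule normal_component_le_dDelta[OF assms(2)])
    finally have "circ (2*\<alpha>) (dDelta \<alpha> (p + t *\<^sub>R v)) \<le> circ (2*\<alpha>) (d + t * a)"
      using elim by (intro circ_antimono) auto
    then show ?case
      using elim unfolding b_def
      by (auto simp: has_gradient phi_eq_circ intro!: DERIV_circ_line)
  qed
  have b0: "b 0 = phi \<alpha> p" by (simp add: b_def d_def phi_eq_circ)
  from touching_barrier(1)[OF near b0 one_neq_zero]
  show "G p \<bullet> v = circ_slope (2*\<alpha>) (dDelta \<alpha> p) * (v \<bullet> normal \<alpha> x0)"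
    by (simp add: d_def a_def)
  assume "(G has_derivative H) (at p)"
  from touching_barrier(2)[OF near b0 _ this DERIV_circ_slope_line] d
  show "circ_slope_deriv (2*\<alpha>) (dDelta \<alpha> p) * (v \<bullet> normal \<alpha> x0)\<^sup>2 \<le> H v \<bullet> v"
    by (simp add: d_def a_def power2_eq_square mult.assoc)
qed

lemma gradient_eq:
  assumes "p \<in> U"
  obtains x0 where "x0 \<in> base \<alpha>" "p = graph_pt \<alpha> x0 + dDelta \<alpha> p *\<^sub>R normal \<alpha> x0"
    "G p = circ_slope (2*\<alpha>) (dDelta \<alpha> p) *\<^sub>R normal \<alpha> x0"
proof -
  obtain x0 where x0: "x0 \<in> base \<alpha>" and p: "p = graph_pt \<alpha> x0 + dDelta \<alpha> p *\<^sub>R normal \<alpha> x0"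
    using foot_point[OF dDelta_pos[OF assms]] by blast
  define w where "w = circ_slope (2*\<alpha>) (dDelta \<alpha> p) *\<^sub>R normal \<alpha> x0"
  have "G p \<bullet> v = w \<bullet> v" for v
    using lower_barrier(1)[OF assms x0 p] by (simp add: w_def inner_commute)
  then have "(G p - w) \<bullet> (G p - w) = 0" by (simp add: inner_diff_left)
  then show ?thesis using that x0 p by (simp add: w_def)
qed

lemma inner_gradient_le:
  assumes "q \<in> U" "norm u = 1"
  shows "G q \<bullet> u \<le> circ_slope (2*\<alpha>) (dDelta \<alpha> q)"
proof -
  obtain x1 where G: "G q = circ_slope (2*\<alpha>) (dDelta \<alpha> q) *\<^sub>R normal \<alpha> x1"
    by (rule gradient_eq[OF assms(1)])
  have "0 \<le> circ_slope (2*\<alpha>) (dDelta \<alpha> q)"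
    using assms(1) by (intro circ_slope_nonneg dDelta_nonneg dDelta_less)
  then have "G q \<bullet> u \<le> circ_slope (2*\<alpha>) (dDelta \<alpha> q) * (norm (normal \<alpha> x1) * norm u)"
    unfolding G inner_scaleR_left by (intro mult_left_mono norm_cauchy_schwarz)
  then show ?thesis using assms(2) by (simp add: norm_normal)
qed

lemma upper_barrier_normal:
  assumes "p \<in> U" "x0 \<in> base \<alpha>" and p: "p = graph_pt \<alpha> x0 + dDelta \<alpha> p *\<^sub>R normal \<alpha> x0"
    and H: "(G has_derivative H) (at p)"
  shows "H (normal \<alpha> x0) \<bullet> normal \<alpha> x0 \<le> circ_slope_deriv (2*\<alpha>) (dDelta \<alpha> p)"
proof -
  define d where "d = dDelta \<alpha> p"
  define \<nu> where "\<nu> = normal \<alpha> x0"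
  define b where "b t = -1 + 2*\<alpha> - circ (2*\<alpha>) (d + t * 1)" for t
  have d: "0 < d" "d < 2*\<alpha>" using dDelta_pos dDelta_less assms(1) by (auto simp: d_def)
  have "\<forall>\<^sub>F t in nhds 0. p + t *\<^sub>R \<nu> \<in> U \<and> d + t *\<^sub>R 1 \<in> {0<..<2*\<alpha>}"
    using d by (intro eventually_conj eventually_line_in_open open_U assms(1)) auto
  then have near: "\<forall>\<^sub>F t in nhds 0. (phi \<alpha> has_derivative (\<lambda>h. G (p + t *\<^sub>R \<nu>) \<bullet> h)) (at (p + t *\<^sub>R \<nu>))
      \<and> (b has_real_derivative circ_slope (2*\<alpha>) (d + t * 1) * 1) (at t)
      \<and> 0 \<le> -1 * (phi \<alpha> (p + t *\<^sub>R \<nu>) - b t)"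
  proof eventually_elim
    case (elim t)
    \<comment> \<open>the foot point \<open>graph_pt \<alpha> x0\<close> is at distance \<open>d + t\<close>\<close>
    have "dDelta \<alpha> (p + t *\<^sub>R \<nu>) \<le> dist (p + t *\<^sub>R \<nu>) (graph_pt \<alpha> x0)"
      unfolding dDelta_def by (rule infdist_le[OF graph_pt_in_Delta[OF assms(2)]])
    also have "\<dots> = d + t"
      using elim by (subst p) (simp add: d_def \<nu>_def dist_norm norm_normal flip: scaleR_add_left)
    finally have "circ (2*\<alpha>) (d + t) \<le> circ (2*\<alpha>) (dDelta \<alpha> (p + t *\<^sub>R \<nu>))"
      by (intro circ_antimono dDelta_nonneg)
    moreover have "(b has_real_derivative circ_slope (2*\<alpha>) (d + t * 1) * 1) (at t)"
      unfolding b_def using elim by (intro DERIV_circ_line) simp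
    ultimately show ?case
      using elim by (simp add: has_gradient phi_eq_circ b_def)
  qed
  have b0: "b 0 = phi \<alpha> p" by (simp add: b_def d_def phi_eq_circ)
  from touching_barrier(2)[OF near b0 _ H DERIV_circ_slope_line] d
  show ?thesis by (simp add: d_def \<nu>_def inner_normal_self)
qed

lemma upper_barrier_tangent:
  assumes "p \<in> U" and x0: "x0 \<in> base \<alpha>" and p: "p = graph_pt \<alpha> x0 + dDelta \<alpha> p *\<^sub>R normal \<alpha> x0"
    and H: "(G has_derivative H) (at p)"
  shows "H (tangent \<alpha> x0) \<bullet> tangent \<alpha> x0
    \<le> circ_slope (2*\<alpha>) (dDelta \<alpha> p) * (\<alpha>*pi/2) * cos (theta \<alpha> x0)"
proof -
  define d where "d = dDelta \<alpha> p"
  define \<tau> where "\<tau> = tangent \<alpha> x0"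
  define b where "b t = -1 + 2*\<alpha> - sqrt (4*\<alpha>^2 - graph_dist_sq \<alpha> x0 d t)" for t
  have d: "0 < d" "d < 2*\<alpha>" using dDelta_pos dDelta_less assms(1) by (auto simp: d_def)
  have "\<forall>\<^sub>F t in nhds 0. graph_dist_sq \<alpha> x0 d t < 4*\<alpha>^2"
    using eventually_graph_dist_sq_less[OF x0 d] .
  moreover have "\<forall>\<^sub>F t in nhds 0. p + t *\<^sub>R \<tau> \<in> U \<and> x0 + t *\<^sub>R cos (theta \<alpha> x0) \<in> base \<alpha>"
    using x0 by (intro eventually_conj eventually_line_in_open open_U open_base assms(1))
  ultimately have near: "\<forall>\<^sub>F t in nhds 0. (phi \<alpha> has_derivative (\<lambda>h. G (p + t *\<^sub>R \<tau>) \<bullet> h)) (at (p + t *\<^sub>R \<tau>))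
      \<and> (b has_real_derivative tangent_barrier_slope \<alpha> x0 d t) (at t)
      \<and> 0 \<le> -1 * (phi \<alpha> (p + t *\<^sub>R \<tau>) - b t)"
  proof eventually_elim
    case (elim t)
    have "dDelta \<alpha> (p + t *\<^sub>R \<tau>) \<le> sqrt (graph_dist_sq \<alpha> x0 d t)"
      using elim p dDelta_le_graph_dist[of x0 t d] by (simp add: d_def \<tau>_def)
    then have "(dDelta \<alpha> (p + t *\<^sub>R \<tau>))\<^sup>2 \<le> (sqrt (graph_dist_sq \<alpha> x0 d t))\<^sup>2"
      by (intro power_mono dDelta_nonneg)
    also have "\<dots> = graph_dist_sq \<alpha> x0 d t" by (simp add: graph_dist_sq_def)
    finally have "(dDelta \<alpha> (p + t *\<^sub>R \<tau>))\<^sup>2 \<le> graph_dist_sq \<alpha> x0 d t" .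
    moreover have "(b has_real_derivative tangent_barrier_slope \<alpha> x0 d t) (at t)"
      unfolding b_def using elim by (intro DERIV_tangent_barrier) simp_all
    ultimately show ?case
      using elim by (simp add: has_gradient phi_def b_def)
  qed
  have b0: "b 0 = phi \<alpha> p" by (simp add: b_def d_def phi_def graph_dist_sq_0)
  from touching_barrier(2)[OF near b0 _ H DERIV_tangent_barrier_slope_0[OF x0 d]]
  show ?thesis by (simp add: d_def \<tau>_def)
qed

text \<open>Along the tangent direction, \<open>G \<bullet> normal\<close> stays below \<open>circ_slope\<close> of the distance to
  the nearby graph points and equals it at \<open>p\<close>; that bound has zero derivative at \<open>p\<close>.\<close>
lemma mixed_tangent_normal:
  assumes "p \<in> U" and x0: "x0 \<in> base \<alpha>" and p: "p = graph_pt \<alpha> x0 + dDelta \<alpha> p *\<^sub>R normal \<alpha> x0"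
    and H: "(G has_derivative H) (at p)"
  shows "H (tangent \<alpha> x0) \<bullet> normal \<alpha> x0 = 0"
proof -
  define d where "d = dDelta \<alpha> p"
  define \<tau> where "\<tau> = tangent \<alpha> x0"
  define \<nu> where "\<nu> = normal \<alpha> x0"
  define e where "e t = circ_slope (2*\<alpha>) (sqrt (graph_dist_sq \<alpha> x0 d t)) - G (p + t *\<^sub>R \<tau>) \<bullet> \<nu>" for t
  have d: "0 < d" "d < 2*\<alpha>" using dDelta_pos dDelta_less assms(1) by (auto simp: d_def)
  have e0: "e 0 = 0"
    using lower_barrier(1)[OF assms(1) x0 p, of \<nu>] d by (simp add: e_def d_def \<nu>_def graph_dist_sq_0 inner_normal_self)
  have "\<forall>\<^sub>F t in nhds 0. p + t *\<^sub>R \<tau> \<in> U \<and> graph_dist_sq \<alpha> x0 d t < 4*\<alpha>^2"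
    using eventually_graph_dist_sq_less[OF x0 d]
    by (intro eventually_conj eventually_line_in_open open_U assms(1))
  moreover have "\<forall>\<^sub>F t in nhds 0. x0 + t *\<^sub>R cos (theta \<alpha> x0) \<in> base \<alpha>"
    using x0 by (intro eventually_line_in_open open_base)
  ultimately have "\<forall>\<^sub>F t in nhds 0. e 0 \<le> e t"
  proof eventually_elim
    case (elim t)
    have "sqrt (graph_dist_sq \<alpha> x0 d t) < sqrt (4*\<alpha>^2)"
      using elim by (intro real_sqrt_less_mono) simp
    also have "sqrt (4*\<alpha>^2) = 2*\<alpha>" using alpha_pos by (simp add: real_sqrt_mult)
    finally have "sqrt (graph_dist_sq \<alpha> x0 d t) < 2*\<alpha>" .
    moreover have "dDelta \<alpha> (p + t *\<^sub>R \<tau>) \<le> sqrt (graph_dist_sq \<alpha> x0 d t)"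
      using elim p dDelta_le_graph_dist[of x0 t d] by (simp add: d_def \<tau>_def)
    ultimately have "circ_slope (2*\<alpha>) (dDelta \<alpha> (p + t *\<^sub>R \<tau>)) \<le> circ_slope (2*\<alpha>) (sqrt (graph_dist_sq \<alpha> x0 d t))"
      by (intro circ_slope_mono dDelta_nonneg)
    moreover have "G (p + t *\<^sub>R \<tau>) \<bullet> \<nu> \<le> circ_slope (2*\<alpha>) (dDelta \<alpha> (p + t *\<^sub>R \<tau>))"
      using elim by (intro inner_gradient_le) (simp_all add: \<nu>_def norm_normal)
    ultimately have "0 \<le> e t" by (simp add: e_def)
    then show ?case using e0 by simp
  qed
  moreover have "(e has_real_derivative 0 - H \<tau> \<bullet> \<nu>) (at 0)"
  proof -
    have x00: "x0 + 0 * cos (theta \<alpha> x0) \<in> base \<alpha>" using x0 by simp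
    have "0 < graph_dist_sq \<alpha> x0 d 0" using d by (simp add: graph_dist_sq_0)
    from DERIV_chain2[OF DERIV_real_sqrt[OF this] DERIV_graph_dist_sq[OF x00]]
    have "((\<lambda>t. sqrt (graph_dist_sq \<alpha> x0 d t)) has_real_derivative 0) (at 0)"
      by (simp add: gap'_0[OF x0])
    from DERIV_chain2[OF DERIV_circ_slope this]
    have "((\<lambda>t. circ_slope (2*\<alpha>) (sqrt (graph_dist_sq \<alpha> x0 d t))) has_real_derivative 0) (at 0)"
      using d by (simp add: graph_dist_sq_0)
    from DERIV_diff[OF this has_real_derivative_inner_along_line[OF H]]
    show ?thesis by (simp add: e_def[abs_def])
  qed
  ultimately have "0 - H \<tau> \<bullet> \<nu> = 0" by (intro DERIV_local_min_nhds)
  then show ?thesis by (simp add: \<tau>_def \<nu>_def)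
qed

lemma hessian_normal_normal:
  assumes "p \<in> U" "x0 \<in> base \<alpha>" "p = graph_pt \<alpha> x0 + dDelta \<alpha> p *\<^sub>R normal \<alpha> x0"
    and "(G has_derivative H) (at p)"
  shows "H (normal \<alpha> x0) \<bullet> normal \<alpha> x0 = circ_slope_deriv (2*\<alpha>) (dDelta \<alpha> p)"
  using lower_barrier(2)[OF assms, of "normal \<alpha> x0"] upper_barrier_normal[OF assms]
  by (simp add: inner_normal_self)

text \<open>\<open>H\<close> need not be symmetric; this mixed entry comes from the lower barrier in the
  directions \<open>normal + \<sigma> tangent\<close>, all of which have normal component \<open>1\<close>.\<close>
lemma hessian_normal_tangent:
  assumes "p \<in> U" "x0 \<in> base \<alpha>" "p = graph_pt \<alpha> x0 + dDelta \<alpha> p *\<^sub>R normal \<alpha> x0"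
    and H: "(G has_derivative H) (at p)"
  shows "H (normal \<alpha> x0) \<bullet> tangent \<alpha> x0 = 0"
proof (rule linear_coeff_zero_if_nonneg[where T = "H (tangent \<alpha> x0) \<bullet> tangent \<alpha> x0"])
  fix \<sigma> :: real
  define \<nu> where "\<nu> = normal \<alpha> x0"
  define \<tau> where "\<tau> = tangent \<alpha> x0"
  have lin: "linear H" using has_derivative_linear[OF H] .
  have "(\<nu> + \<sigma> *\<^sub>R \<tau>) \<bullet> normal \<alpha> x0 = 1"
    by (simp add: \<nu>_def \<tau>_def inner_add_left inner_normal_self inner_tangent_normal)
  then have "circ_slope_deriv (2*\<alpha>) (dDelta \<alpha> p) \<le> H (\<nu> + \<sigma> *\<^sub>R \<tau>) \<bullet> (\<nu> + \<sigma> *\<^sub>R \<tau>)"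
    using lower_barrier(2)[OF assms, of "\<nu> + \<sigma> *\<^sub>R \<tau>"] by simp
  also have "\<dots> = H \<nu> \<bullet> \<nu> + \<sigma> * (H \<nu> \<bullet> \<tau> + H \<tau> \<bullet> \<nu>) + \<sigma>\<^sup>2 * (H \<tau> \<bullet> \<tau>)"
    by (simp add: linear_add[OF lin] linear_scale[OF lin] inner_add_left inner_add_right
        power2_eq_square algebra_simps)
  finally show "0 \<le> \<sigma> * (H \<nu> \<bullet> \<tau>) + \<sigma>\<^sup>2 * (H \<tau> \<bullet> \<tau>)"
    using hessian_normal_normal[OF assms] mixed_tangent_normal[OF assms] by (simp add: \<nu>_def \<tau>_def)
qed

lemma det_hessian_le:
  assumes "p \<in> U" "x0 \<in> base \<alpha>" "p = graph_pt \<alpha> x0 + dDelta \<alpha> p *\<^sub>R normal \<alpha> x0"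
    and H: "(G has_derivative H) (at p)"
  shows "fst (H (1,0)) * snd (H (0,1)) - snd (H (1,0)) * fst (H (0,1))
    \<le> circ_slope_deriv (2*\<alpha>) (dDelta \<alpha> p)
      * (circ_slope (2*\<alpha>) (dDelta \<alpha> p) * (\<alpha>*pi/2) * cos (theta \<alpha> x0))"
proof -
  have "fst (H (1,0)) * snd (H (0,1)) - snd (H (1,0)) * fst (H (0,1))
      = circ_slope_deriv (2*\<alpha>) (dDelta \<alpha> p) * (H (tangent \<alpha> x0) \<bullet> tangent \<alpha> x0)"
    using det_rotated_frame[OF has_derivative_linear[OF H] sin_cos_squared_add[of "theta \<alpha> x0"]]
      hessian_normal_normal[OF assms] mixed_tangent_normal[OF assms] hessian_normal_tangent[OF assms]
    by (simp add: normal_def tangent_def)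
  also have "\<dots> \<le> circ_slope_deriv (2*\<alpha>) (dDelta \<alpha> p)
      * (circ_slope (2*\<alpha>) (dDelta \<alpha> p) * (\<alpha>*pi/2) * cos (theta \<alpha> x0))"
    using upper_barrier_tangent[OF assms] circ_pos[of "dDelta \<alpha> p" "2*\<alpha>"]
      dDelta_pos[OF assms(1)] dDelta_less[OF assms(1)]
    by (intro mult_left_mono) (auto simp: circ_slope_deriv_def)
  finally show ?thesis .
qed

theorem curvature_bound:
  assumes "p \<in> U" and H: "(G has_derivative H) (at p)"
  shows "(fst (H (1,0)) * snd (H (0,1)) - snd (H (1,0)) * fst (H (0,1)))
      / (1 + (fst (G p))\<^sup>2 + (snd (G p))\<^sup>2) powr (3/2) \<le> -(pi/4) * snd (G p)"
proof -
  obtain x0 where x0: "x0 \<in> base \<alpha>" and p: "p = graph_pt \<alpha> x0 + dDelta \<alpha> p *\<^sub>R normal \<alpha> x0"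
    and Gp: "G p = circ_slope (2*\<alpha>) (dDelta \<alpha> p) *\<^sub>R normal \<alpha> x0"
    by (rule gradient_eq[OF assms(1)])
  define d where "d = dDelta \<alpha> p"
  define k where "k = circ_slope (2*\<alpha>) d"
  let ?s = "sin (theta \<alpha> x0)" and ?c = "cos (theta \<alpha> x0)"
  have d: "0 < d" "d < 2*\<alpha>" using dDelta_pos dDelta_less assms(1) by (auto simp: d_def)
  have "(fst (G p))\<^sup>2 + (snd (G p))\<^sup>2 = (k * ?s)\<^sup>2 + (k * ?c)\<^sup>2"
    by (simp add: Gp normal_def k_def d_def)
  also have "\<dots> = k\<^sup>2 * (?s\<^sup>2 + ?c\<^sup>2)" by (simp only: power_mult_distrib distrib_left)
  finally have G_sq: "1 + (fst (G p))\<^sup>2 + (snd (G p))\<^sup>2 = 1 + k\<^sup>2" by simp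
  have "(fst (H (1,0)) * snd (H (0,1)) - snd (H (1,0)) * fst (H (0,1))) / (1 + k\<^sup>2) powr (3/2)
      \<le> circ_slope_deriv (2*\<alpha>) d * (k * (\<alpha>*pi/2) * ?c) / (1 + k\<^sup>2) powr (3/2)"
    unfolding d_def k_def by (rule divide_right_mono[OF det_hessian_le[OF assms(1) x0 p H]]) simp
  also have "\<dots> = k * (\<alpha>*pi/2) * ?c * (circ_slope_deriv (2*\<alpha>) d / (1 + k\<^sup>2) powr (3/2))"
    by simp
  also have "\<dots> = k * (\<alpha>*pi/2) * ?c / (2*\<alpha>)"
    using circ_curvature[of "2*\<alpha>" d] d alpha_pos by (simp add: k_def)
  also have "\<dots> = -(pi/4) * snd (G p)"
    using alpha_pos by (simp add: Gp normal_def k_def d_def field_simps)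
  finally show ?thesis unfolding G_sq .
qed

end

theorem lemma4p3:
  fixes \<alpha> :: real
  assumes "0 < \<alpha>" and "\<alpha> < 1/6"
  shows "(\<forall>C. C \<subseteq> phiDom \<alpha> \<and> convex C \<longrightarrow> convex_on C (phi \<alpha>)) \<and>
    (\<forall>p U (G :: real \<times> real \<Rightarrow> real \<times> real) H.
        open U \<and> p \<in> U \<and> U \<subseteq> phiDom \<alpha> \<and>
        (\<forall>q\<in>U. (phi \<alpha> has_derivative (\<lambda>h. fst (G q) * fst h + snd (G q) * snd h)) (at q)) \<and>
        (G has_derivative H) (at p)
      \<longrightarrow> (fst (H (1,0)) * snd (H (0,1)) - snd (H (1,0)) * fst (H (0,1)))
            / (1 + (fst (G p))^2 + (snd (G p))^2) powr (3/2)
          \<le> -(pi/4) * snd (G p))"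
proof -
  interpret Delta_geometry \<alpha> using assms(1) by unfold_locales
  show ?thesis
  proof (intro conjI allI impI, goal_cases)
    case (1 C)
    then show ?case by (auto intro: convex_on_phi)
  next
    case (2 p U G H)
    interpret phi_gradient \<alpha> U G using 2 assms(1) by unfold_locales (auto simp: inner_real_pair)
    from 2 show ?case by (intro curvature_bound) auto
  qed
qed

end
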